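(* Let $P=\{x\in\mathbb R^n : Ax=b,\ x\ge 0\}$ be a polyhedron in standard form, and let $$P_A=\{(y^+,y^-)\in\mathbb R^{2n} : A(y^+-y^-)=0,\ \|y^+\|_1+\|y^-\|_1=1,\ y^+,y^-\ge 0\}.$$ Let $S:=\{(y^+,y^-) : y^+_i=\max\{g_i,0\},\ y^-_i=\max\{-g_i,0\}\ (i\le n),\ g\in\mathcal C(A)\}$ and $T:=\{(y^+,y^-) : \text{for some } i\le n,\ y^+_i=y^-_i=1,\ y^+_j=y^-_j=0\ (j\ne i)\}$. Then there is a subset $T'\subseteq T$ with $|T'|\le n$ such that $S\cup T'$ generates the extreme rays of the cone $\{(y^+,y^-): A(y^+-y^-)=0,\ y^\pm\ge0\}$, and the vertex set of $P_A$ is $S_1\cup T'_1$, where $S_1$ and $T'_1$ consist of the vectors $r/(\|y^+\|_1+\|y^-\|_1)$ for $r=(y^+,y^-)$ in $S$ and in $T'$ respectively.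
   Context: $\mathcal C(A)$ denotes the set of circuits of the standard form polyhedron: all $g\in\ker(A)\setminus\{0\}$, normalized to coprime integer components, that are support-minimal in $\ker(A)\setminus\{0\}$ (no $x\in\ker(A)\setminus\{0\}$ has $\operatorname{supp}(x)\subsetneq\operatorname{supp}(g)$). *)

theory Defs
  imports "HOL-Analysis.Analysis"
begin

definition supp :: "real^'n \<Rightarrow> 'n set" where
  "supp x = {i. x $ i \<noteq> 0}"

definition circuits :: "real^'n^'m \<Rightarrow> (real^'n) set" where
  "circuits A = {g. A *v g = 0 \<and> g \<noteq> 0
      \<and> (\<forall>i. g $ i \<in> \<int>)
      \<and> Gcd (range (\<lambda>i. \<lfloor>g $ i\<rfloor>)) = (1::int)
      \<and> \<not> (\<exists>x. A *v x = 0 \<and> x \<noteq> 0 \<and> supp x \<subset> supp g)}"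

definition l1norm2 :: "(real^'n) \<times> (real^'n) \<Rightarrow> real" where
  "l1norm2 r = (\<Sum>i\<in>UNIV. \<bar>fst r $ i\<bar>) + (\<Sum>i\<in>UNIV. \<bar>snd r $ i\<bar>)"

definition split_cone :: "real^'n^'m \<Rightarrow> ((real^'n) \<times> (real^'n)) set" where
  "split_cone A = {(yp, ym). A *v (yp - ym) = 0 \<and> (\<forall>i. 0 \<le> yp $ i \<and> 0 \<le> ym $ i)}"

definition P_A :: "real^'n^'m \<Rightarrow> ((real^'n) \<times> (real^'n)) set" where
  "P_A A = {(yp, ym). A *v (yp - ym) = 0 \<and> l1norm2 (yp, ym) = 1
              \<and> (\<forall>i. 0 \<le> yp $ i \<and> 0 \<le> ym $ i)}"

definition ray :: "'a::real_vector \<Rightarrow> 'a set" where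
  "ray r = {t *\<^sub>R r | t. 0 \<le> t}"

definition extreme_rays :: "'a::real_vector set \<Rightarrow> 'a set set" where
  "extreme_rays K = {R. R face_of K \<and> (\<exists>r. r \<noteq> 0 \<and> R = ray r)}"

definition S_set :: "real^'n^'m \<Rightarrow> ((real^'n) \<times> (real^'n)) set" where
  "S_set A = {((\<chi> i. max (g $ i) 0), (\<chi> i. max (- g $ i) 0)) | g. g \<in> circuits A}"

definition T_set :: "((real^'n) \<times> (real^'n)) set" where
  "T_set = {(axis i 1, axis i 1) | i. True}"

definition normalize_l1 :: "(real^'n) \<times> (real^'n) \<Rightarrow> (real^'n) \<times> (real^'n)" where
  "normalize_l1 r = (1 / l1norm2 r) *\<^sub>R r"

end

theory Submission
  imports Defs
begin

text \<open>
  Let \<open>K\<close> be the cone of pairs \<open>(y\<^sup>+, y\<^sup>-) \<ge> 0\<close> with \<open>A (y\<^sup>+ - y\<^sup>-) = 0\<close>. In a pointed convex cone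
  the faces that are rays are the rays spanned by extreme directions, and \<open>P\<^sub>A\<close> is the slice of
  \<open>K\<close> by the linear functional summing all entries, so its vertices are the extreme directions
  scaled into the slice. An extreme direction \<open>(p, q)\<close> with \<open>p\<^sub>i, q\<^sub>i > 0\<close> dominates a multiple of
  \<open>(e\<^sub>i, e\<^sub>i)\<close> and hence is one, and \<open>(e\<^sub>i, e\<^sub>i)\<close> is extreme iff \<open>A e\<^sub>i \<noteq> 0\<close>. Otherwise \<open>p\<close> and \<open>q\<close>
  are the positive and negative parts of \<open>x = p - q \<in> ker A\<close>, and \<open>(p, q)\<close> is extreme iff \<open>x\<close> has
  minimal support: a kernel vector of smaller support lets one perturb \<open>x\<close> in both directions
  without changing signs. For rational \<open>A\<close>, a \<open>\<rat>\<close>-linear functional \<open>\<real> \<rightarrow> \<rat>\<close> maps a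
  support-minimal \<open>x\<close> to a rational kernel vector supported in \<open>supp x\<close>, hence to a multiple of
  \<open>x\<close>; clearing denominators and common factors gives a circuit.
\<close>

section \<open>Extreme directions of pointed convex cones\<close>

definition extreme_direction :: "'a::real_vector set \<Rightarrow> 'a \<Rightarrow> bool" where
  "extreme_direction K r \<longleftrightarrow>
     r \<in> K \<and> r \<noteq> 0 \<and> (\<forall>u\<in>K. \<forall>w\<in>K. u + w = r \<longrightarrow> (\<exists>t\<ge>0. u = t *\<^sub>R r))"

lemma extreme_direction_nonzero: "extreme_direction K r \<Longrightarrow> r \<noteq> 0"
  by (simp add: extreme_direction_def)

lemma ray_eq_conic_hull: "ray r = conic hull {r}"
  by (auto simp: ray_def conic_hull_explicit)

lemma ray_scaleR:
  assumes "0 < c"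
  shows "ray (c *\<^sub>R r) = ray r"
proof -
  have "(\<exists>s\<ge>0. x = s *\<^sub>R c *\<^sub>R r) \<longleftrightarrow> (\<exists>t\<ge>0. x = t *\<^sub>R r)" for x
  proof
    assume "\<exists>s\<ge>0. x = s *\<^sub>R c *\<^sub>R r"
    then show "\<exists>t\<ge>0. x = t *\<^sub>R r"
      using assms by (metis mult_nonneg_nonneg less_eq_real_def scaleR_scaleR)
  next
    assume "\<exists>t\<ge>0. x = t *\<^sub>R r"
    then obtain t where "0 \<le> t" "x = t *\<^sub>R r"
      by blast
    then show "\<exists>s\<ge>0. x = s *\<^sub>R c *\<^sub>R r"
      using assms by (intro exI[of _ "t / c"]) auto
  qed
  then show ?thesis
    unfolding ray_def by blast
qed

lemma extreme_direction_scaleR: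
  assumes K: "convex_cone K" and r: "extreme_direction K r" and "0 < c"
  shows "extreme_direction K (c *\<^sub>R r)"
proof -
  have "\<exists>t\<ge>0. u = t *\<^sub>R c *\<^sub>R r" if "u \<in> K" "w \<in> K" "u + w = c *\<^sub>R r" for u w
  proof -
    have "(1/c) *\<^sub>R u + (1/c) *\<^sub>R w = r"
      using that \<open>0 < c\<close> by (simp flip: scaleR_add_right)
    moreover have "(1/c) *\<^sub>R u \<in> K" "(1/c) *\<^sub>R w \<in> K"
      using that K \<open>0 < c\<close> by (simp_all add: convex_cone_scaleR)
    ultimately obtain t where "0 \<le> t" "(1/c) *\<^sub>R u = t *\<^sub>R r"
      using r unfolding extreme_direction_def by blast
    moreover have "u = c *\<^sub>R ((1/c) *\<^sub>R u)"
      using \<open>0 < c\<close> by simp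
    ultimately show ?thesis
      by (metis mult.commute scaleR_scaleR)
  qed
  with assms show ?thesis
    unfolding extreme_direction_def by (simp add: convex_cone_scaleR)
qed

lemma pointed_cone_multiple_nonneg:
  assumes K: "convex_cone K" and pointed: "\<And>x. x \<in> K \<Longrightarrow> - x \<in> K \<Longrightarrow> x = 0"
    and "u \<in> K" "r \<in> K" "r \<noteq> 0" "u = c *\<^sub>R r"
  shows "0 \<le> c"
proof (rule ccontr)
  assume "\<not> 0 \<le> c"
  then have "0 \<le> - 1 / c" "(- 1 / c) *\<^sub>R u = - r"
    using \<open>u = c *\<^sub>R r\<close> by simp_all
  then have "- r \<in> K"
    using convex_cone_scaleR[OF K _ \<open>u \<in> K\<close>] by metis
  with pointed \<open>r \<in> K\<close> \<open>r \<noteq> 0\<close> show False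
    by blast
qed

lemma extreme_direction_summand_in_ray:
  assumes K: "convex_cone K" and pointed: "\<And>x. x \<in> K \<Longrightarrow> - x \<in> K \<Longrightarrow> x = 0"
    and r: "extreme_direction K r" and "a \<in> K" "b \<in> K" "a + b \<in> ray r"
  shows "a \<in> ray r"
proof -
  obtain s where "0 \<le> s" and s: "a + b = s *\<^sub>R r"
    using \<open>a + b \<in> ray r\<close> unfolding ray_def by blast
  show ?thesis
  proof (cases "s = 0")
    case True
    then have "b = - a"
      using s by (simp add: add_eq_0_iff)
    then have "a = 0"
      using pointed \<open>a \<in> K\<close> \<open>b \<in> K\<close> by blast
    then show ?thesis
      unfolding ray_def by (auto intro: exI[of _ 0])
  next
    case False
    with \<open>0 \<le> s\<close> have "0 < s"
      by simp
    have "(1/s) *\<^sub>R a + (1/s) *\<^sub>R b = r"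
      using s \<open>0 < s\<close> by (simp flip: scaleR_add_right)
    moreover have "(1/s) *\<^sub>R a \<in> K" "(1/s) *\<^sub>R b \<in> K"
      using assms \<open>0 < s\<close> by (simp_all add: convex_cone_scaleR)
    ultimately obtain t where "0 \<le> t" "(1/s) *\<^sub>R a = t *\<^sub>R r"
      using r unfolding extreme_direction_def by blast
    then have "a = (s * t) *\<^sub>R r"
      using \<open>0 < s\<close> by (metis (no_types, lifting) divide_self_if less_irrefl scaleR_one
          scaleR_scaleR times_divide_eq_left mult.commute)
    then show ?thesis
      unfolding ray_def using \<open>0 < s\<close> \<open>0 \<le> t\<close> by auto
  qed
qed

lemma face_of_ray_imp_extreme_direction:
  assumes K: "convex_cone K" and face: "ray r face_of K" and "r \<noteq> 0"
  shows "extreme_direction K r"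
proof -
  have "r \<in> ray r"
    unfolding ray_def by (auto intro: exI[of _ 1])
  then have "r \<in> K"
    using face face_of_imp_subset by blast
  moreover have "\<exists>t\<ge>0. u = t *\<^sub>R r" if "u \<in> K" "w \<in> K" "u + w = r" for u w
  proof (cases "u = w")
    case True
    with \<open>u + w = r\<close> have "u = (1/2) *\<^sub>R r"
      by (metis scaleR_2 scaleR_half_double)
    then show ?thesis
      by (intro exI[of _ "1/2"]) simp
  next
    case False
    have "r = midpoint (2 *\<^sub>R u) (2 *\<^sub>R w)"
      using \<open>u + w = r\<close> by (simp add: midpoint_def scaleR_add_right)
    then have "r \<in> open_segment (2 *\<^sub>R u) (2 *\<^sub>R w)"
      using False by simp
    moreover have "2 *\<^sub>R u \<in> K" "2 *\<^sub>R w \<in> K"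
      using K that by (simp_all add: convex_cone_scaleR)
    ultimately have "2 *\<^sub>R u \<in> ray r"
      using face_ofD[OF face] \<open>r \<in> ray r\<close> by blast
    then obtain t where "0 \<le> t" and t: "2 *\<^sub>R u = t *\<^sub>R r"
      unfolding ray_def by auto
    have "u = (1/2) *\<^sub>R (2 *\<^sub>R u)"
      by simp
    also have "\<dots> = (t/2) *\<^sub>R r"
      unfolding t by simp
    finally show ?thesis
      using \<open>0 \<le> t\<close> by (intro exI[of _ "t/2"]) simp
  qed
  ultimately show ?thesis
    using \<open>r \<noteq> 0\<close> unfolding extreme_direction_def by blast
qed

lemma extreme_direction_imp_face_of_ray:
  assumes K: "convex_cone K" and pointed: "\<And>x. x \<in> K \<Longrightarrow> - x \<in> K \<Longrightarrow> x = 0"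
    and r: "extreme_direction K r"
  shows "ray r face_of K"
proof -
  have conic: "conic (ray r)"
    by (simp add: ray_eq_conic_hull conic_conic_hull)
  have "a \<in> ray r \<and> b \<in> ray r"
    if "a \<in> K" "b \<in> K" "x \<in> ray r" "x \<in> open_segment a b" for a b x
  proof -
    obtain u where u: "0 < u" "u < 1" and x: "x = (1 - u) *\<^sub>R a + u *\<^sub>R b"
      using \<open>x \<in> open_segment a b\<close> by (auto simp: in_segment)
    have "(1 - u) *\<^sub>R a \<in> K" "u *\<^sub>R b \<in> K"
      using K that u by (simp_all add: convex_cone_scaleR)
    then have a: "(1 - u) *\<^sub>R a \<in> ray r" and b: "u *\<^sub>R b \<in> ray r"
      using extreme_direction_summand_in_ray[OF K pointed r] \<open>x \<in> ray r\<close> x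
      by (metis add.commute)+
    have "(1 / (1 - u)) *\<^sub>R ((1 - u) *\<^sub>R a) \<in> ray r"
      by (rule conicD[OF conic a]) (use u in simp)
    moreover have "(1 / u) *\<^sub>R (u *\<^sub>R b) \<in> ray r"
      by (rule conicD[OF conic b]) (use u in simp)
    ultimately show ?thesis
      using u by simp
  qed
  moreover have "ray r \<subseteq> K"
    unfolding ray_eq_conic_hull
    using r K by (intro hull_minimal) (auto simp: extreme_direction_def convex_cone_def)
  moreover have "convex (ray r)"
    unfolding ray_eq_conic_hull by (simp add: convex_conic_hull)
  ultimately show ?thesis
    unfolding face_of_def by blast
qed

lemma extreme_rays_eq_ray_image:
  assumes K: "convex_cone K" and pointed: "\<And>x. x \<in> K \<Longrightarrow> - x \<in> K \<Longrightarrow> x = 0"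
    and D: "\<And>r. extreme_direction K r \<longleftrightarrow> (\<exists>c>0. \<exists>d\<in>D. r = c *\<^sub>R d)"
  shows "extreme_rays K = ray ` D"
proof -
  have "ray r face_of K \<and> r \<noteq> 0 \<longleftrightarrow> extreme_direction K r" for r
    using face_of_ray_imp_extreme_direction[OF K] extreme_direction_imp_face_of_ray[OF K pointed]
      extreme_direction_nonzero by blast
  then have "extreme_rays K = ray ` {r. extreme_direction K r}"
    unfolding extreme_rays_def by auto
  also have "\<dots> = ray ` D"
  proof
    show "ray ` {r. extreme_direction K r} \<subseteq> ray ` D"
      using D by (auto simp: ray_scaleR)
    have "extreme_direction K d" if "d \<in> D" for d
      using D that by (metis scaleR_one zero_less_one)
    then show "ray ` D \<subseteq> ray ` {r. extreme_direction K r}"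
      by auto
  qed
  finally show ?thesis .
qed

lemma extreme_point_of_slice_imp_extreme_direction:
  fixes l :: "'a::real_vector \<Rightarrow> real"
  assumes K: "convex_cone K" and l: "linear l" and pos: "\<And>x. x \<in> K \<Longrightarrow> x \<noteq> 0 \<Longrightarrow> 0 < l x"
    and v: "v extreme_point_of {x \<in> K. l x = 1}"
  shows "extreme_direction K v"
proof -
  let ?L = "{x \<in> K. l x = 1}"
  have "v \<in> K" "l v = 1"
    using v by (auto simp: extreme_point_of_def)
  moreover have "l 0 = 0"
    by (rule linear_0[OF l])
  ultimately have "v \<noteq> 0"
    by auto
  have "\<exists>t\<ge>0. u = t *\<^sub>R v" if "u \<in> K" "w \<in> K" "u + w = v" "u \<noteq> 0" "w \<noteq> 0" for u w
  proof -
    define a where "a = (1 / l u) *\<^sub>R u"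
    define b where "b = (1 / l w) *\<^sub>R w"
    have lu: "0 < l u" "0 < l w" "l u + l w = 1"
      using that pos \<open>l v = 1\<close> linear_add[OF l] by auto
    have "a \<in> ?L" "b \<in> ?L"
      using that lu K by (simp_all add: a_def b_def convex_cone_scaleR linear_scale[OF l])
    have ua: "u = l u *\<^sub>R a" "w = l w *\<^sub>R b"
      using lu by (simp_all add: a_def b_def)
    have "v = (1 - l w) *\<^sub>R a + l w *\<^sub>R b"
      using that lu ua by (metis add_diff_cancel_right')
    moreover have "l w < 1"
      using lu by simp
    ultimately have "v \<in> open_segment a b" if "a \<noteq> b"
      using that lu by (auto simp: in_segment)
    then have "a = b"
      using v \<open>a \<in> ?L\<close> \<open>b \<in> ?L\<close> unfolding extreme_point_of_def by blast
    with \<open>v = (1 - l w) *\<^sub>R a + l w *\<^sub>R b\<close> have "v = a"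
      by (simp add: scaleR_collapse)
    then show ?thesis
      using ua lu by (intro exI[of _ "l u"]) auto
  qed
  then have "\<exists>t\<ge>0. u = t *\<^sub>R v" if "u \<in> K" "w \<in> K" "u + w = v" for u w
    using that by (metis add.right_neutral order.refl scaleR_one scaleR_zero_left zero_le_one)
  with \<open>v \<in> K\<close> \<open>v \<noteq> 0\<close> show ?thesis
    unfolding extreme_direction_def by blast
qed

lemma extreme_direction_imp_extreme_point_of_slice:
  fixes l :: "'a::real_vector \<Rightarrow> real"
  assumes K: "convex_cone K" and l: "linear l" and v: "extreme_direction K v" and "l v = 1"
  shows "v extreme_point_of {x \<in> K. l x = 1}"
proof -
  let ?L = "{x \<in> K. l x = 1}"
  have onto_v: "a = v" if a: "a \<in> ?L" and "b \<in> K" "0 < s" and sum: "s *\<^sub>R a + b = v" for a b s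
  proof -
    have "s *\<^sub>R a \<in> K"
      using a K \<open>0 < s\<close> by (simp add: convex_cone_scaleR)
    then obtain t where t: "s *\<^sub>R a = t *\<^sub>R v"
      using v \<open>b \<in> K\<close> sum unfolding extreme_direction_def by blast
    have "s = l (s *\<^sub>R a)"
      using a by (simp add: linear_scale[OF l])
    also have "\<dots> = t"
      using t \<open>l v = 1\<close> by (simp add: linear_scale[OF l])
    finally have "s = t" .
    with t \<open>0 < s\<close> show "a = v"
      by simp
  qed
  have "v \<notin> open_segment a b" if "a \<in> ?L" "b \<in> ?L" for a b
  proof
    assume "v \<in> open_segment a b"
    then obtain u where "0 < u" "u < 1" "a \<noteq> b" and u: "v = (1 - u) *\<^sub>R a + u *\<^sub>R b"
      by (auto simp: in_segment)
    have "u *\<^sub>R b \<in> K" "(1 - u) *\<^sub>R a \<in> K"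
      using that K \<open>0 < u\<close> \<open>u < 1\<close> by (simp_all add: convex_cone_scaleR)
    then have "a = v" "b = v"
      using onto_v[of a "u *\<^sub>R b" "1 - u"] onto_v[of b "(1 - u) *\<^sub>R a" u] that u \<open>0 < u\<close> \<open>u < 1\<close>
      by (simp_all add: add.commute)
    with \<open>a \<noteq> b\<close> show False
      by simp
  qed
  moreover have "v \<in> ?L"
    using v \<open>l v = 1\<close> by (simp add: extreme_direction_def)
  ultimately show ?thesis
    unfolding extreme_point_of_def by blast
qed

lemma extreme_points_of_slice_eq:
  fixes l :: "'a::real_vector \<Rightarrow> real"
  assumes K: "convex_cone K" and l: "linear l" and pos: "\<And>x. x \<in> K \<Longrightarrow> x \<noteq> 0 \<Longrightarrow> 0 < l x"
    and D: "\<And>r. extreme_direction K r \<longleftrightarrow> (\<exists>c>0. \<exists>d\<in>D. r = c *\<^sub>R d)"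
  shows "{v. v extreme_point_of {x \<in> K. l x = 1}} = (\<lambda>d. (1 / l d) *\<^sub>R d) ` D"
proof
  show "{v. v extreme_point_of {x \<in> K. l x = 1}} \<subseteq> (\<lambda>d. (1 / l d) *\<^sub>R d) ` D"
  proof
    fix v assume "v \<in> {v. v extreme_point_of {x \<in> K. l x = 1}}"
    then have "l v = 1" "extreme_direction K v"
      using extreme_point_of_slice_imp_extreme_direction[OF K l pos]
      by (auto simp: extreme_point_of_def)
    then obtain c d where "0 < c" "d \<in> D" and v: "v = c *\<^sub>R d"
      using D by blast
    then have "c * l d = 1"
      using \<open>l v = 1\<close> by (simp add: linear_scale[OF l])
    moreover from this have "l d \<noteq> 0"
      by auto
    ultimately have "c = 1 / l d"
      by (simp add: field_simps)
    with v \<open>d \<in> D\<close> show "v \<in> (\<lambda>d. (1 / l d) *\<^sub>R d) ` D"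
      by blast
  qed
next
  show "(\<lambda>d. (1 / l d) *\<^sub>R d) ` D \<subseteq> {v. v extreme_point_of {x \<in> K. l x = 1}}"
  proof clarify
    fix d assume "d \<in> D"
    then have d: "extreme_direction K d"
      using D by (metis scaleR_one zero_less_one)
    then have "0 < l d"
      using pos by (simp add: extreme_direction_def)
    with d show "((1 / l d) *\<^sub>R d) extreme_point_of {x \<in> K. l x = 1}"
      by (simp add: extreme_direction_imp_extreme_point_of_slice[OF K l] extreme_direction_scaleR[OF K]
          linear_scale[OF l])
  qed
qed

section \<open>The cone of sign-split kernel vectors\<close>

lemma convex_cone_split_cone: "convex_cone (split_cone A)"
  unfolding convex_cone_iff
proof (intro conjI ballI allI impI)
  show "0 \<in> split_cone A"
    by (simp add: split_cone_def zero_prod_def)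
next
  fix x y assume "x \<in> split_cone A" "y \<in> split_cone A"
  then show "x + y \<in> split_cone A"
    by (cases x, cases y) (simp add: split_cone_def add_diff_add matrix_vector_right_distrib)
next
  fix x and c :: real assume "x \<in> split_cone A" "0 \<le> c"
  then show "c *\<^sub>R x \<in> split_cone A"
    by (cases x) (simp add: split_cone_def matrix_vector_mult_scaleR flip: scaleR_diff_right)
qed

lemma split_cone_pointed: "x \<in> split_cone A \<Longrightarrow> - x \<in> split_cone A \<Longrightarrow> x = 0"
  by (cases x) (simp add: split_cone_def vec_eq_iff zero_prod_def order.antisym)

lemma split_cone_summand_zero:
  assumes "u \<in> split_cone A" "w \<in> split_cone A" "u + w = r"
  shows "fst r $ j = 0 \<Longrightarrow> fst u $ j = 0" and "snd r $ j = 0 \<Longrightarrow> snd u $ j = 0"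
  using assms by (cases u, cases w, auto simp: split_cone_def add_nonneg_eq_0_iff)+

definition entry_sum :: "(real^'n) \<times> (real^'n) \<Rightarrow> real" where
  "entry_sum r = (\<Sum>i\<in>UNIV. fst r $ i) + (\<Sum>i\<in>UNIV. snd r $ i)"

lemma linear_entry_sum: "linear entry_sum"
  by (rule linearI) (simp_all add: entry_sum_def sum.distrib sum_distrib_left distrib_left)

lemma l1norm2_eq_entry_sum:
  assumes "r \<in> split_cone A"
  shows "l1norm2 r = entry_sum r"
proof -
  obtain p q where r: "r = (p, q)"
    by (cases r)
  have "\<bar>p $ i\<bar> = p $ i" "\<bar>q $ i\<bar> = q $ i" for i
    using assms by (simp_all add: r split_cone_def)
  then show ?thesis
    by (simp add: r l1norm2_def entry_sum_def)
qed

lemma entry_sum_pos: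
  assumes "r \<in> split_cone A" "r \<noteq> 0"
  shows "0 < entry_sum r"
proof -
  obtain p q where r: "r = (p, q)"
    by (cases r)
  have nonneg: "0 \<le> p $ i" "0 \<le> q $ i" for i
    using assms(1) by (simp_all add: r split_cone_def)
  obtain i where "p $ i \<noteq> 0 \<or> q $ i \<noteq> 0"
    using assms(2) by (auto simp: r zero_prod_def vec_eq_iff)
  then have "0 < p $ i \<or> 0 < q $ i"
    using nonneg[of i] by (auto simp: order.strict_iff_order)
  moreover have "0 < sum f UNIV" if "0 < f i" "\<And>j. 0 \<le> (f j :: real)" for f
    using sum_pos2[of UNIV i f] that by simp
  ultimately have "0 < (\<Sum>i\<in>UNIV. p $ i) \<or> 0 < (\<Sum>i\<in>UNIV. q $ i)"
    using nonneg by blast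
  moreover have "0 \<le> (\<Sum>i\<in>UNIV. p $ i)" "0 \<le> (\<Sum>i\<in>UNIV. q $ i)"
    using nonneg by (simp_all add: sum_nonneg)
  ultimately show ?thesis
    by (auto simp: r entry_sum_def)
qed

lemma P_A_eq_slice: "P_A A = {r \<in> split_cone A. entry_sum r = 1}"
proof (intro set_eqI)
  fix r :: "(real^'a) \<times> (real^'a)"
  have "r \<in> P_A A \<longleftrightarrow> r \<in> split_cone A \<and> l1norm2 r = 1"
    by (cases r) (auto simp: P_A_def split_cone_def)
  then show "r \<in> P_A A \<longleftrightarrow> r \<in> {r \<in> split_cone A. entry_sum r = 1}"
    using l1norm2_eq_entry_sum[of r A] by auto
qed

definition support_minimal :: "real^'n^'m \<Rightarrow> real^'n \<Rightarrow> bool" where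
  "support_minimal A g \<longleftrightarrow>
     A *v g = 0 \<and> g \<noteq> 0 \<and> \<not> (\<exists>x. A *v x = 0 \<and> x \<noteq> 0 \<and> supp x \<subset> supp g)"

lemma circuits_iff:
  "g \<in> circuits A \<longleftrightarrow>
     support_minimal A g \<and> (\<forall>i. g $ i \<in> \<int>) \<and> Gcd (range (\<lambda>i. \<lfloor>g $ i\<rfloor>)) = 1"
  by (auto simp: circuits_def support_minimal_def)

lemma supp_scaleR: "c \<noteq> 0 \<Longrightarrow> supp (c *\<^sub>R x) = supp x"
  by (simp add: supp_def)

lemma support_minimal_scaleR:
  "c \<noteq> 0 \<Longrightarrow> support_minimal A (c *\<^sub>R g) \<longleftrightarrow> support_minimal A g"
  by (simp add: support_minimal_def supp_scaleR matrix_vector_mult_scaleR)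

lemma support_minimal_multiple:
  assumes g: "support_minimal A g" and x: "A *v x = 0" "supp x \<subseteq> supp g"
  shows "\<exists>c. x = c *\<^sub>R g"
proof -
  obtain j where j: "g $ j \<noteq> 0"
    using g by (auto simp: support_minimal_def vec_eq_iff)
  define y where "y = x - (x $ j / g $ j) *\<^sub>R g"
  have "A *v y = 0"
    using g x by (simp add: y_def support_minimal_def matrix_vector_mult_diff_distrib
        matrix_vector_mult_scaleR)
  moreover have "supp y \<subset> supp g"
  proof -
    have "supp y \<subseteq> supp g"
      using x(2) by (auto simp: y_def supp_def)
    moreover have "j \<notin> supp y" "j \<in> supp g"
      using j by (simp_all add: y_def supp_def)
    ultimately show ?thesis
      by blast
  qed
  ultimately have "y = 0"
    using g unfolding support_minimal_def by blast
  then show ?thesis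
    by (auto simp: y_def)
qed

lemma uminus_mem_circuits:
  assumes "g \<in> circuits A"
  shows "- g \<in> circuits A"
proof -
  have "\<lfloor>- g $ i\<rfloor> = - \<lfloor>g $ i\<rfloor>" for i
  proof -
    have "g $ i \<in> \<int>"
      using assms by (simp add: circuits_def)
    then show ?thesis
      by (metis Ints_cases floor_of_int of_int_minus)
  qed
  then have "range (\<lambda>i. \<lfloor>(- g) $ i\<rfloor>) = uminus ` range (\<lambda>i. \<lfloor>g $ i\<rfloor>)"
    by auto
  moreover have "support_minimal A (- g)"
    using assms support_minimal_scaleR[of "-1" A g] by (simp add: circuits_iff)
  ultimately show ?thesis
    using assms by (simp add: circuits_iff)
qed

lemma circuit_multiple_pos:
  assumes "g \<in> circuits A" "c \<noteq> 0"
  shows "\<exists>g'\<in>circuits A. \<exists>c'>0. c *\<^sub>R g = c' *\<^sub>R g'"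
proof (cases "0 < c")
  case True
  with assms show ?thesis
    by blast
next
  case False
  with assms have "0 < - c" "c *\<^sub>R g = (- c) *\<^sub>R (- g)"
    by simp_all
  with uminus_mem_circuits[OF assms(1)] show ?thesis
    by blast
qed

definition sign_split :: "real^'n \<Rightarrow> (real^'n) \<times> (real^'n)" where
  "sign_split g = ((\<chi> i. max (g $ i) 0), (\<chi> i. max (- g $ i) 0))"

lemma S_set_eq: "S_set A = sign_split ` circuits A"
  by (auto simp: S_set_def sign_split_def)

lemma sign_split_diff: "fst (sign_split g) - snd (sign_split g) = g"
  by (simp add: sign_split_def vec_eq_iff max_def)

lemma sign_split_eq_0_iff: "sign_split g = 0 \<longleftrightarrow> g = 0"
proof
  assume "sign_split g = 0"
  then show "g = 0"
    using sign_split_diff[of g] by simp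
qed (simp add: sign_split_def zero_prod_def vec_eq_iff)

lemma sign_split_mem_split_cone: "sign_split g \<in> split_cone A \<longleftrightarrow> A *v g = 0"
  using sign_split_diff[of g] by (simp add: split_cone_def sign_split_def)

lemma sign_split_scaleR: "0 < c \<Longrightarrow> sign_split (c *\<^sub>R g) = c *\<^sub>R sign_split g"
  by (simp add: sign_split_def vec_eq_iff max_mult_distrib_left)

lemma scaleR_sign_split_cancel:
  assumes "c *\<^sub>R sign_split a = t *\<^sub>R sign_split b"
  shows "c *\<^sub>R a = t *\<^sub>R b"
proof -
  have "c *\<^sub>R a = fst (c *\<^sub>R sign_split a) - snd (c *\<^sub>R sign_split a)"
    by (simp add: sign_split_diff flip: scaleR_diff_right)
  also have "\<dots> = t *\<^sub>R b"
    unfolding assms by (simp add: sign_split_diff flip: scaleR_diff_right)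
  finally show ?thesis .
qed

lemma eq_scaleR_sign_split:
  assumes "p - q = c *\<^sub>R g" and "\<And>j. g $ j \<le> 0 \<Longrightarrow> p $ j = 0" and "\<And>j. 0 \<le> g $ j \<Longrightarrow> q $ j = 0"
  shows "(p, q) = c *\<^sub>R sign_split g"
proof -
  have "p $ j = c * max (g $ j) 0 \<and> q $ j = c * max (- g $ j) 0" for j
  proof -
    have "p $ j - q $ j = c * g $ j"
      using assms(1) by (simp add: vec_eq_iff)
    then show ?thesis
      using assms(2,3)[of j] by (auto simp: max_def)
  qed
  then show ?thesis
    by (simp add: sign_split_def vec_eq_iff)
qed

lemma sign_split_perturbation:
  assumes "\<And>j. \<bar>d $ j\<bar> \<le> \<bar>x $ j\<bar>"
  shows "sign_split (x - d) + sign_split (x + d) = 2 *\<^sub>R sign_split x"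
proof -
  have "max (x $ j - d $ j) 0 + max (x $ j + d $ j) 0 = 2 * max (x $ j) 0 \<and>
        max (d $ j - x $ j) 0 + max (- x $ j - d $ j) 0 = 2 * max (- x $ j) 0" for j
    using assms[of j] by (auto simp: max_def abs_if split: if_split_asm)
  then show ?thesis
    by (simp add: sign_split_def vec_eq_iff)
qed

lemma ex_small_multiple_abs_le:
  fixes x z :: "real^'n"
  assumes "supp z \<subseteq> supp x"
  shows "\<exists>\<epsilon>>0. \<forall>j. \<epsilon> * \<bar>z $ j\<bar> \<le> \<bar>x $ j\<bar>"
proof -
  define \<epsilon> where "\<epsilon> = Min (insert 1 ((\<lambda>j. \<bar>x $ j\<bar> / \<bar>z $ j\<bar>) ` supp z))"
  have "0 < \<epsilon>"
    using assms by (auto simp: \<epsilon>_def supp_def)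
  moreover have "\<epsilon> * \<bar>z $ j\<bar> \<le> \<bar>x $ j\<bar>" for j
  proof (cases "j \<in> supp z")
    case True
    then have "\<epsilon> \<le> \<bar>x $ j\<bar> / \<bar>z $ j\<bar>"
      by (simp add: \<epsilon>_def)
    with True show ?thesis
      by (simp add: supp_def le_divide_eq)
  qed (simp add: supp_def)
  ultimately show ?thesis
    by blast
qed

section \<open>Extreme directions of the split cone\<close>

lemma extreme_direction_axis:
  fixes A :: "real^'n^'m"
  assumes "A *v axis i 1 \<noteq> 0"
  shows "extreme_direction (split_cone A) (axis i 1, axis i 1)"
    (is "extreme_direction ?K (?e, ?e)")
proof -
  have "\<exists>t\<ge>0. u = t *\<^sub>R (?e, ?e)" if uw: "u \<in> ?K" "w \<in> ?K" "u + w = (?e, ?e)" for u w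
  proof -
    obtain p q where u: "u = (p, q)"
      by (cases u)
    have "A *v (p - q) = 0" and "0 \<le> p $ i"
      using uw by (simp_all add: u split_cone_def)
    have "p $ j = 0" "q $ j = 0" if "j \<noteq> i" for j
      using split_cone_summand_zero[OF uw, of j] \<open>j \<noteq> i\<close> by (simp_all add: u axis_def)
    then have p: "p = p $ i *\<^sub>R ?e" and q: "q = q $ i *\<^sub>R ?e"
      by (auto simp: vec_eq_iff axis_def)
    have "(p $ i - q $ i) *\<^sub>R (A *v ?e) = 0"
      using \<open>A *v (p - q) = 0\<close> p q by (metis matrix_vector_mult_scaleR scaleR_diff_left)
    with assms have "p $ i = q $ i"
      by simp
    then have "u = p $ i *\<^sub>R (?e, ?e)"
      using u p q by (metis scaleR_Pair)
    with \<open>0 \<le> p $ i\<close> show ?thesis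
      by blast
  qed
  moreover have "(?e, ?e) \<in> ?K"
    by (simp add: split_cone_def axis_def)
  moreover have "(?e, ?e) \<noteq> 0"
    by (simp add: zero_prod_def axis_eq_0_iff)
  ultimately show ?thesis
    unfolding extreme_direction_def by blast
qed

lemma extreme_direction_axis_iff:
  fixes A :: "real^'n^'m"
  shows "extreme_direction (split_cone A) (axis i 1, axis i 1) \<longleftrightarrow> A *v axis i 1 \<noteq> 0"
    (is "extreme_direction ?K (?e, ?e) \<longleftrightarrow> _")
proof
  assume ext: "extreme_direction ?K (?e, ?e)"
  show "A *v ?e \<noteq> 0"
  proof
    assume "A *v ?e = 0"
    then have "(?e, 0) \<in> ?K" "(0, ?e) \<in> ?K"
      by (simp_all add: split_cone_def axis_def matrix_vector_mult_diff_distrib)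
    moreover have "(?e, 0) + (0, ?e) = (?e, ?e)"
      by simp
    ultimately obtain t where "(?e, 0) = t *\<^sub>R (?e, ?e)"
      using ext unfolding extreme_direction_def by blast
    then have "t *\<^sub>R ?e = ?e" "t *\<^sub>R ?e = 0"
      by (metis fst_conv snd_conv scaleR_Pair)+
    then show False
      by (metis axis_eq_0_iff scaleR_eq_0_iff zero_neq_one)
  qed
qed (rule extreme_direction_axis)

lemma support_minimal_imp_extreme_direction:
  assumes g: "support_minimal A g"
  shows "extreme_direction (split_cone A) (sign_split g)"
proof -
  have "sign_split g \<in> split_cone A" "sign_split g \<noteq> 0"
    using g by (simp_all add: support_minimal_def sign_split_mem_split_cone sign_split_eq_0_iff)
  moreover have "\<exists>t\<ge>0. u = t *\<^sub>R sign_split g"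
    if uw: "u \<in> split_cone A" "w \<in> split_cone A" "u + w = sign_split g" for u w
  proof -
    obtain p q where u: "u = (p, q)"
      by (cases u)
    have "A *v (p - q) = 0"
      using uw by (simp add: u split_cone_def)
    have p0: "p $ j = 0" if "g $ j \<le> 0" for j
      using split_cone_summand_zero(1)[OF uw, of j] that
      by (simp add: u sign_split_def)
    have q0: "q $ j = 0" if "0 \<le> g $ j" for j
      using split_cone_summand_zero(2)[OF uw, of j] that
      by (simp add: u sign_split_def)
    have "supp (p - q) \<subseteq> supp g"
      using p0 q0 by (force simp: supp_def)
    then obtain c where "p - q = c *\<^sub>R g"
      using support_minimal_multiple[OF g \<open>A *v (p - q) = 0\<close>] by blast
    then have "u = c *\<^sub>R sign_split g"
      unfolding u using p0 q0 by (rule eq_scaleR_sign_split)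
    moreover from this have "0 \<le> c"
      by (intro pointed_cone_multiple_nonneg[OF convex_cone_split_cone split_cone_pointed[of _ A]
            uw(1) \<open>sign_split g \<in> split_cone A\<close> \<open>sign_split g \<noteq> 0\<close>])
    ultimately show ?thesis
      by blast
  qed
  ultimately show ?thesis
    unfolding extreme_direction_def by blast
qed

lemma extreme_direction_sign_split_imp_support_minimal:
  assumes ext: "extreme_direction (split_cone A) (sign_split x)"
  shows "support_minimal A x"
proof -
  have "A *v x = 0" "x \<noteq> 0"
    using ext by (simp_all add: extreme_direction_def sign_split_mem_split_cone sign_split_eq_0_iff)
  moreover have False if z: "A *v z = 0" "z \<noteq> 0" "supp z \<subset> supp x" for z
  proof -
    obtain \<epsilon> where "0 < \<epsilon>" and small: "\<And>j. \<epsilon> * \<bar>z $ j\<bar> \<le> \<bar>x $ j\<bar>"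
      using ex_small_multiple_abs_le[of z x] z(3) by auto
    define d where "d = \<epsilon> *\<^sub>R z"
    have "(1/2) *\<^sub>R sign_split (x - d) + (1/2) *\<^sub>R sign_split (x + d) = sign_split x"
      using sign_split_perturbation[of d x] small \<open>0 < \<epsilon>\<close>
      by (simp add: d_def abs_mult flip: scaleR_add_right)
    moreover have "sign_split (x - d) \<in> split_cone A" "sign_split (x + d) \<in> split_cone A"
      using \<open>A *v x = 0\<close> z(1)
      by (simp_all add: d_def sign_split_mem_split_cone matrix_vector_mult_diff_distrib
          matrix_vector_right_distrib matrix_vector_mult_scaleR)
    then have "(1/2) *\<^sub>R sign_split (x - d) \<in> split_cone A" "(1/2) *\<^sub>R sign_split (x + d) \<in> split_cone A"
      by (simp_all add: convex_cone_scaleR[OF convex_cone_split_cone])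
    ultimately obtain t where "(1/2) *\<^sub>R sign_split (x - d) = t *\<^sub>R sign_split x"
      using ext unfolding extreme_direction_def by blast
    then have half: "(1/2) *\<^sub>R (x - d) = t *\<^sub>R x"
      by (rule scaleR_sign_split_cancel)
    have "d = x - 2 *\<^sub>R ((1/2) *\<^sub>R (x - d))"
      by simp
    also have "\<dots> = (1 - 2 * t) *\<^sub>R x"
      unfolding half by (simp add: scaleR_diff_left)
    finally have "d = (1 - 2 * t) *\<^sub>R x" .
    have "z = (1 / \<epsilon>) *\<^sub>R d"
      using \<open>0 < \<epsilon>\<close> by (simp add: d_def)
    also have "\<dots> = ((1 - 2 * t) / \<epsilon>) *\<^sub>R x"
      unfolding \<open>d = (1 - 2 * t) *\<^sub>R x\<close> by simp
    finally have "z = ((1 - 2 * t) / \<epsilon>) *\<^sub>R x" .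
    with \<open>z \<noteq> 0\<close> have "supp z = supp x"
      by (metis scaleR_zero_left supp_scaleR)
    with z(3) show False
      by simp
  qed
  ultimately show ?thesis
    unfolding support_minimal_def by blast
qed

lemma extreme_direction_split_cone_overlap:
  fixes A :: "real^'n^'m"
  assumes ext: "extreme_direction (split_cone A) (p, q)" and "0 < p $ i" "0 < q $ i"
  shows "\<exists>c>0. (p, q) = c *\<^sub>R (axis i 1, axis i 1)"
proof -
  define e :: "real^'n" where "e = axis i 1"
  define m where "m = min (p $ i) (q $ i)"
  have "0 < m"
    using assms by (simp add: m_def)
  have "(e, e) \<in> split_cone A"
    by (simp add: e_def split_cone_def axis_def)
  then have "m *\<^sub>R (e, e) \<in> split_cone A"
    using \<open>0 < m\<close> by (intro convex_cone_scaleR[OF convex_cone_split_cone]) simp_all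
  moreover have "(p, q) - m *\<^sub>R (e, e) \<in> split_cone A"
  proof -
    have "(p - m *\<^sub>R e) - (q - m *\<^sub>R e) = p - q"
      by simp
    moreover have "0 \<le> p $ j - m * e $ j" "0 \<le> q $ j - m * e $ j" for j
      using ext by (auto simp: e_def axis_def m_def extreme_direction_def split_cone_def)
    ultimately show ?thesis
      using ext by (simp add: extreme_direction_def split_cone_def)
  qed
  moreover have "m *\<^sub>R (e, e) + ((p, q) - m *\<^sub>R (e, e)) = (p, q)"
    by simp
  ultimately obtain t where "0 \<le> t" and t: "m *\<^sub>R (e, e) = t *\<^sub>R (p, q)"
    using ext unfolding extreme_direction_def by blast
  moreover have "m *\<^sub>R (e, e) \<noteq> 0"
    using \<open>0 < m\<close> by (simp add: e_def zero_prod_def axis_eq_0_iff)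
  ultimately have "0 < t"
    by (metis less_eq_real_def scaleR_zero_left)
  have "(p, q) = (1 / t) *\<^sub>R (t *\<^sub>R (p, q))"
    using \<open>0 < t\<close> by simp
  also have "\<dots> = (m / t) *\<^sub>R (e, e)"
    unfolding t[symmetric] by simp
  finally show ?thesis
    using \<open>0 < m\<close> \<open>0 < t\<close> by (auto simp: e_def)
qed

lemma extreme_direction_split_cone_cases:
  fixes A :: "real^'n^'m"
  assumes ext: "extreme_direction (split_cone A) (p, q)"
  obtains (axis) i c where "0 < c" "(p, q) = c *\<^sub>R (axis i 1, axis i 1)"
    | (sign_split) "(p, q) = sign_split (p - q)"
proof (cases "\<exists>i. 0 < p $ i \<and> 0 < q $ i")
  case True
  then show thesis
    using extreme_direction_split_cone_overlap[OF ext] axis by blast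
next
  case False
  have nonneg: "0 \<le> p $ j" "0 \<le> q $ j" for j
    using ext by (simp_all add: extreme_direction_def split_cone_def)
  have disjoint: "p $ j = 0 \<or> q $ j = 0" for j
    using False nonneg[of j] by (auto simp: order.strict_iff_order)
  have "max (p $ j - q $ j) 0 = p $ j \<and> max (- (p $ j - q $ j)) 0 = q $ j" for j
    using disjoint[of j] nonneg[of j] by (auto simp: max_def)
  then have "(p, q) = sign_split (p - q)"
    by (simp add: sign_split_def vec_eq_iff)
  then show thesis
    by (rule sign_split)
qed

section \<open>Circuits of rational matrices\<close>

lemma ex_rat_linear_functional:
  fixes a :: real
  assumes "a \<noteq> 0"
  shows "\<exists>\<phi>::real \<Rightarrow> rat. \<phi> a = 1 \<and> (\<forall>q x. \<phi> (of_rat q * x) = q * \<phi> x)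
           \<and> (\<forall>(f::'a \<Rightarrow> real) F. \<phi> (sum f F) = (\<Sum>i\<in>F. \<phi> (f i)))"
proof -
  interpret real_over_rat: vector_space "\<lambda>q::rat. \<lambda>x::real. of_rat q * x"
    by unfold_locales (auto simp: algebra_simps of_rat_add of_rat_mult)
  interpret rat_over_rat: vector_space "\<lambda>q::rat. \<lambda>x::rat. q * x"
    by unfold_locales (auto simp: algebra_simps)
  interpret vector_space_pair "\<lambda>q::rat. \<lambda>x::real. of_rat q * x" "\<lambda>q::rat. \<lambda>x::rat. q * x" ..
  have "real_over_rat.independent {a}"
    using assms by (simp add: real_over_rat.independent_insert real_over_rat.span_empty)
  from linear_independent_extend[OF this, of "\<lambda>_. 1"] obtain \<phi> where
    \<phi>: "Vector_Spaces.linear (\<lambda>q::rat. \<lambda>x::real. of_rat q * x) (\<lambda>q::rat. \<lambda>x::rat. q * x) \<phi>"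
      "\<phi> a = 1"
    by auto
  then interpret Vector_Spaces.linear "\<lambda>q::rat. \<lambda>x::real. of_rat q * x" "\<lambda>q::rat. \<lambda>x::rat. q * x" \<phi>
    by simp
  show ?thesis
    using \<phi> scale sum by auto
qed

lemma rational_kernel_vector:
  fixes A :: "real^'n^'m"
  assumes rational: "\<forall>i j. A $ i $ j \<in> \<rat>" and "A *v x = 0" "x $ j \<noteq> 0"
  shows "\<exists>y. (\<forall>i. y $ i \<in> \<rat>) \<and> A *v y = 0 \<and> supp y \<subseteq> supp x \<and> y $ j = 1"
proof -
  obtain \<phi> :: "real \<Rightarrow> rat" where one: "\<phi> (x $ j) = 1"
    and scale: "\<And>q a. \<phi> (of_rat q * a) = q * \<phi> a"
    and sum: "\<And>(f::'n \<Rightarrow> real) F. \<phi> (sum f F) = (\<Sum>i\<in>F. \<phi> (f i))"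
    using ex_rat_linear_functional[OF \<open>x $ j \<noteq> 0\<close>] by blast
  have "\<phi> 0 = 0"
    using sum[of _ "{}"] by simp
  obtain a where a: "\<And>k i. A $ k $ i = of_rat (a k i)"
  proof -
    have "\<forall>k i. \<exists>q. A $ k $ i = of_rat q"
      using rational Rats_cases by metis
    then show ?thesis
      using that by metis
  qed
  define y :: "real^'n" where "y = (\<chi> i. of_rat (\<phi> (x $ i)))"
  have "(A *v y) $ k = 0" for k
  proof -
    have "(A *v y) $ k = (\<Sum>i\<in>UNIV. of_rat (a k i) * of_rat (\<phi> (x $ i)))"
      by (simp add: y_def matrix_vector_mult_def a)
    also have "\<dots> = of_rat (\<phi> (\<Sum>i\<in>UNIV. of_rat (a k i) * x $ i))"
      by (simp add: sum scale of_rat_sum of_rat_mult)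
    also have "\<dots> = of_rat (\<phi> ((A *v x) $ k))"
      by (simp add: matrix_vector_mult_def a)
    also have "\<dots> = 0"
      using \<open>A *v x = 0\<close> \<open>\<phi> 0 = 0\<close> by simp
    finally show ?thesis .
  qed
  then have "A *v y = 0"
    by (simp add: vec_eq_iff)
  moreover have "supp y \<subseteq> supp x"
    using \<open>\<phi> 0 = 0\<close> by (auto simp: supp_def y_def)
  ultimately show ?thesis
    using one by (intro exI[of _ y]) (simp add: y_def)
qed

lemma rational_vector_integer_multiple:
  fixes y :: "real^'n"
  assumes "\<forall>i. y $ i \<in> \<rat>"
  shows "\<exists>D>0. \<exists>k. D *\<^sub>R y = (\<chi> i. of_int (k i))"
proof -
  have "\<forall>i. \<exists>m n. n \<noteq> 0 \<and> y $ i = of_int m / real n"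
    using assms Rats_eq_int_div_nat by blast
  then obtain m n where mn: "\<And>i. n i \<noteq> 0 \<and> y $ i = of_int (m i) / real (n i)"
    by metis
  define D where "D = (\<Prod>i\<in>UNIV. real (n i))"
  define k where "k i = m i * int (\<Prod>j\<in>UNIV - {i}. n j)" for i
  have "D * y $ i = of_int (k i)" for i
  proof -
    have "D = real (n i) * (\<Prod>j\<in>UNIV - {i}. real (n j))"
      by (simp add: D_def prod.remove)
    then show ?thesis
      using mn[of i] by (simp add: k_def)
  qed
  moreover have "D > 0"
    using mn by (simp add: D_def prod_pos)
  ultimately show ?thesis
    by (intro exI[of _ D] conjI exI[of _ k]) (simp_all add: vec_eq_iff)
qed

lemma int_vector_primitive_factor:
  fixes k :: "'n \<Rightarrow> int"
  assumes "k i \<noteq> 0"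
  shows "\<exists>G>0. \<exists>k'. (\<forall>i. k i = G * k' i) \<and> Gcd (range k') = 1"
proof -
  define G where "G = Gcd (range k)"
  have "G \<noteq> 0"
    using assms by (auto simp: G_def)
  then have "G > 0"
    by (simp add: G_def order.not_eq_order_implies_strict)
  define k' where "k' i = k i div G" for i
  have k: "k i = G * k' i" for i
    by (simp add: k'_def G_def)
  then have "range k = (*) G ` range k'"
    by auto
  then have "G = Gcd ((*) G ` range k')"
    by (simp add: G_def)
  also have "\<dots> = G * Gcd (range k')"
    using \<open>G > 0\<close> by (simp add: Gcd_mult abs_mult)
  finally have "G = G * Gcd (range k')" .
  then have "Gcd (range k') = 1"
    using \<open>G \<noteq> 0\<close> by simp
  with k \<open>G > 0\<close> show ?thesis
    by blast
qed

lemma rational_vector_primitive_multiple: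
  fixes y :: "real^'n"
  assumes "\<forall>i. y $ i \<in> \<rat>" "y $ j \<noteq> 0"
  shows "\<exists>d>0. \<exists>k. Gcd (range k) = 1 \<and> y = d *\<^sub>R (\<chi> i. of_int (k i))"
proof -
  obtain D k where "0 < D" and k: "D *\<^sub>R y = (\<chi> i. of_int (k i))"
    using rational_vector_integer_multiple[OF assms(1)] by blast
  have "(D *\<^sub>R y) $ j = of_int (k j)"
    unfolding k by simp
  moreover have "D * y $ j \<noteq> 0"
    using \<open>y $ j \<noteq> 0\<close> \<open>0 < D\<close> by simp
  ultimately have "k j \<noteq> 0"
    by auto
  then obtain G k' where "0 < G" and G: "\<And>i. k i = G * k' i" and "Gcd (range k') = 1"
    using int_vector_primitive_factor[of k j] by blast
  have "y = (1 / D) *\<^sub>R (D *\<^sub>R y)"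
    using \<open>0 < D\<close> by simp
  also have "\<dots> = (of_int G / D) *\<^sub>R (\<chi> i. of_int (k' i))"
    unfolding k by (simp add: G vec_eq_iff)
  finally show ?thesis
    using \<open>0 < D\<close> \<open>0 < G\<close> \<open>Gcd (range k') = 1\<close> by (intro exI[of _ "of_int G / D"]) auto
qed

lemma support_minimal_circuit_multiple:
  fixes A :: "real^'n^'m"
  assumes rational: "\<forall>i j. A $ i $ j \<in> \<rat>" and x: "support_minimal A x"
  shows "\<exists>g\<in>circuits A. \<exists>c>0. x = c *\<^sub>R g"
proof -
  obtain j where "x $ j \<noteq> 0"
    using x by (auto simp: support_minimal_def vec_eq_iff)
  moreover have "A *v x = 0"
    using x by (simp add: support_minimal_def)
  ultimately obtain y where y_rat: "\<forall>i. y $ i \<in> \<rat>" and "A *v y = 0" "supp y \<subseteq> supp x" "y $ j = 1"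
    using rational_kernel_vector[OF rational] by blast
  then obtain c where c: "y = c *\<^sub>R x"
    using support_minimal_multiple[OF x] by blast
  with \<open>y $ j = 1\<close> have "c \<noteq> 0"
    by auto
  obtain d k where "0 < d" "Gcd (range k) = 1" and d: "y = d *\<^sub>R (\<chi> i. of_int (k i))"
    using rational_vector_primitive_multiple[OF y_rat] \<open>y $ j = 1\<close> by force
  define h :: "real^'n" where "h = (\<chi> i. of_int (k i))"
  have "h = (1 / d) *\<^sub>R (d *\<^sub>R h)"
    using \<open>0 < d\<close> by simp
  also have "\<dots> = (c / d) *\<^sub>R x"
    unfolding h_def d[symmetric] c by simp
  finally have "h = (c / d) *\<^sub>R x" .
  then have "support_minimal A h"
    using x \<open>c \<noteq> 0\<close> \<open>0 < d\<close> by (simp add: support_minimal_scaleR)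
  moreover have "range (\<lambda>i. \<lfloor>h $ i\<rfloor>) = range k"
    by (simp add: h_def)
  ultimately have "h \<in> circuits A"
    using \<open>Gcd (range k) = 1\<close> by (simp add: circuits_iff h_def)
  moreover have "x = (d / c) *\<^sub>R h"
    using \<open>h = (c / d) *\<^sub>R x\<close> \<open>c \<noteq> 0\<close> \<open>0 < d\<close> by simp
  ultimately show ?thesis
    using circuit_multiple_pos[of h A "d / c"] \<open>c \<noteq> 0\<close> \<open>0 < d\<close> by auto
qed

section \<open>The extreme rays of the split cone and the vertices of \<open>P_A\<close>\<close>

definition nonzero_column_pairs :: "real^'n^'m \<Rightarrow> ((real^'n) \<times> (real^'n)) set" where
  "nonzero_column_pairs A = {(axis i 1, axis i 1) | i. A *v axis i 1 \<noteq> 0}"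

lemma nonzero_column_pairs_subset_T_set: "nonzero_column_pairs A \<subseteq> T_set"
  by (auto simp: nonzero_column_pairs_def T_set_def)

lemma card_nonzero_column_pairs_le:
  fixes A :: "real^'n^'m"
  shows "card (nonzero_column_pairs A) \<le> CARD('n)"
proof -
  have "nonzero_column_pairs A = (\<lambda>i. (axis i 1, axis i 1)) ` {i. A *v axis i 1 \<noteq> 0}"
    by (auto simp: nonzero_column_pairs_def)
  then have "card (nonzero_column_pairs A) \<le> card {i. A *v axis i 1 \<noteq> 0}"
    by (simp add: card_image_le)
  also have "\<dots> \<le> CARD('n)"
    by (simp add: card_mono)
  finally show ?thesis .
qed

lemma extreme_direction_split_cone_iff:
  fixes A :: "real^'n^'m"
  assumes rational: "\<forall>i j. A $ i $ j \<in> \<rat>"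
  shows "extreme_direction (split_cone A) r \<longleftrightarrow>
    (\<exists>c>0. \<exists>d \<in> S_set A \<union> nonzero_column_pairs A. r = c *\<^sub>R d)"
    (is "?ext r \<longleftrightarrow> (\<exists>c>0. \<exists>d \<in> ?D. r = c *\<^sub>R d)")
proof
  assume ext: "?ext r"
  obtain p q where r: "r = (p, q)"
    by (cases r)
  from ext[unfolded r] show "\<exists>c>0. \<exists>d \<in> ?D. r = c *\<^sub>R d"
  proof (cases rule: extreme_direction_split_cone_cases)
    case (axis i c)
    then have "(axis i 1, axis i 1) = (1 / c) *\<^sub>R r"
      by (simp add: r)
    then have "?ext (axis i 1, axis i 1)"
      using extreme_direction_scaleR[OF convex_cone_split_cone ext, of "1 / c"] axis by simp
    then have "(axis i 1, axis i 1) \<in> nonzero_column_pairs A"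
      by (auto simp: nonzero_column_pairs_def extreme_direction_axis_iff)
    with axis show ?thesis
      unfolding r by blast
  next
    case sign_split
    with ext have "support_minimal A (p - q)"
      unfolding r by (simp add: extreme_direction_sign_split_imp_support_minimal)
    then obtain g c where "g \<in> circuits A" "0 < c" "p - q = c *\<^sub>R g"
      using support_minimal_circuit_multiple[OF rational] by blast
    then have "r = c *\<^sub>R sign_split g" "sign_split g \<in> S_set A"
      using sign_split by (simp_all add: r sign_split_scaleR S_set_eq)
    with \<open>0 < c\<close> show ?thesis
      by blast
  qed
next
  assume "\<exists>c>0. \<exists>d \<in> ?D. r = c *\<^sub>R d"
  then obtain c d where "0 < c" "d \<in> ?D" "r = c *\<^sub>R d"
    by blast
  moreover have "?ext d"
    using \<open>d \<in> ?D\<close>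
    by (auto simp: S_set_eq circuits_iff nonzero_column_pairs_def extreme_direction_axis_iff
        intro: support_minimal_imp_extreme_direction)
  ultimately show "?ext r"
    using extreme_direction_scaleR[OF convex_cone_split_cone] by blast
qed

lemma extreme_rays_split_cone:
  assumes "\<forall>i j. A $ i $ j \<in> \<rat>"
  shows "extreme_rays (split_cone A) = ray ` (S_set A \<union> nonzero_column_pairs A)"
  by (rule extreme_rays_eq_ray_image[OF convex_cone_split_cone split_cone_pointed
        extreme_direction_split_cone_iff[OF assms]])

lemma extreme_points_P_A:
  assumes "\<forall>i j. A $ i $ j \<in> \<rat>"
  shows "{v. v extreme_point_of P_A A} = normalize_l1 ` (S_set A \<union> nonzero_column_pairs A)"
proof -
  note D = extreme_direction_split_cone_iff[OF assms]
  have "{v. v extreme_point_of P_A A} =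
      (\<lambda>d. (1 / entry_sum d) *\<^sub>R d) ` (S_set A \<union> nonzero_column_pairs A)"
    unfolding P_A_eq_slice
    by (rule extreme_points_of_slice_eq[OF convex_cone_split_cone linear_entry_sum
          entry_sum_pos[of _ A] D])
  also have "\<dots> = normalize_l1 ` (S_set A \<union> nonzero_column_pairs A)"
  proof (rule image_cong)
    fix d assume "d \<in> S_set A \<union> nonzero_column_pairs A"
    then have "d \<in> split_cone A"
      using D[of d] by (auto simp: extreme_direction_def intro: exI[of _ 1])
    then show "(1 / entry_sum d) *\<^sub>R d = normalize_l1 d"
      by (simp add: normalize_l1_def l1norm2_eq_entry_sum)
  qed simp
  finally show ?thesis .
qed

theorem corollary3:
  fixes A :: "real^'n^'m"
  assumes rational: "\<forall>i j. A $ i $ j \<in> \<rat>"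
  shows "\<exists>T'. T' \<subseteq> T_set \<and> card T' \<le> CARD('n)
           \<and> extreme_rays (split_cone A) = ray ` (S_set A \<union> T')
           \<and> {v. v extreme_point_of P_A A} = normalize_l1 ` (S_set A \<union> T')"
  using nonzero_column_pairs_subset_T_set card_nonzero_column_pairs_le
    extreme_rays_split_cone[OF rational] extreme_points_P_A[OF rational]
  by blast

end
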